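(* Let $\ell$ be an integral domain such that $\operatorname{KH}_0(\ell)\neq0$. Put $\Omega_0=(t^2-t)\ell[t]$ and $\Omega_1=\{(p,q)\in\ell[t]\times\ell[t]: p(1)=q(0),\ p(0)=q(1)=0\}$. Then the algebra homomorphism $\beta:\Omega_0\to\Omega_1$, $\beta(p)=(p,0)$, is not a polynomial homotopy equivalence.
   Context: Algebras are associative not necessarily unital $\ell$-algebras. $\operatorname{KH}_0$ denotes Weibel's homotopy $K$-theory in degree $0$. Polynomial homotopy: $f,g:A\to B$ elementary homotopic if there is a homomorphism $H:A\to B[t]$ with $\mathrm{ev}_0H=f$, $\mathrm{ev}_1H=g$; homotopy is the generated equivalence relation; a polynomial homotopy equivalence is a homomorphism $f$ for which there is $g$ with $gf$ and $fg$ homotopic to the identities. *)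

theory Defs
  imports "HOL-Computational_Algebra.Polynomial" "HOL-Library.Function_Algebras"
begin

text \<open>An l-algebra is modelled as a subset A of a commutative ring 'r whose l-module
structure comes from a ring map iota : l -> 'r, scalar multiplication being
c . x = iota c * x. Algebras need not be unital and homomorphisms need not preserve 1.\<close>

definition alg_hom :: "('l \<Rightarrow> 'r::comm_ring_1) \<Rightarrow> ('l \<Rightarrow> 's::comm_ring_1) \<Rightarrow> 'r set \<Rightarrow> 's set \<Rightarrow> ('r \<Rightarrow> 's) \<Rightarrow> bool" where
  "alg_hom iA iB A B f \<longleftrightarrow>
     (\<forall>x\<in>A. f x \<in> B) \<and>
     (\<forall>x\<in>A. \<forall>y\<in>A. f (x + y) = f x + f y) \<and>
     (\<forall>x\<in>A. \<forall>y\<in>A. f (x * y) = f x * f y) \<and>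
     (\<forall>c. \<forall>x\<in>A. f (iA c * x) = iB c * f x)"

definition poly_alg :: "'s::zero set \<Rightarrow> 's poly set" where
  "poly_alg B = {p. \<forall>k. coeff p k \<in> B}"

definition poly_emb :: "('l \<Rightarrow> 's::zero) \<Rightarrow> 'l \<Rightarrow> 's poly" where
  "poly_emb iB c = [:iB c:]"

definition elem_homotopic ::
  "('l \<Rightarrow> 'r::comm_ring_1) \<Rightarrow> ('l \<Rightarrow> 's::comm_ring_1) \<Rightarrow> 'r set \<Rightarrow> 's set \<Rightarrow> ('r \<Rightarrow> 's) \<Rightarrow> ('r \<Rightarrow> 's) \<Rightarrow> bool" where
  "elem_homotopic iA iB A B f g \<longleftrightarrow>
     alg_hom iA iB A B f \<and> alg_hom iA iB A B g \<and>
     (\<exists>H. alg_hom iA (poly_emb iB) A (poly_alg B) H \<and>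
          (\<forall>x\<in>A. poly (H x) 0 = f x) \<and> (\<forall>x\<in>A. poly (H x) 1 = g x))"

definition homotopic ::
  "('l \<Rightarrow> 'r::comm_ring_1) \<Rightarrow> ('l \<Rightarrow> 's::comm_ring_1) \<Rightarrow> 'r set \<Rightarrow> 's set \<Rightarrow> ('r \<Rightarrow> 's) \<Rightarrow> ('r \<Rightarrow> 's) \<Rightarrow> bool" where
  "homotopic iA iB A B = (\<lambda>f g. elem_homotopic iA iB A B f g \<or> elem_homotopic iA iB A B g f)\<^sup>*\<^sup>*"

definition poly_htpy_equiv ::
  "('l \<Rightarrow> 'r::comm_ring_1) \<Rightarrow> ('l \<Rightarrow> 's::comm_ring_1) \<Rightarrow> 'r set \<Rightarrow> 's set \<Rightarrow> ('r \<Rightarrow> 's) \<Rightarrow> bool" where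
  "poly_htpy_equiv iA iB A B f \<longleftrightarrow>
     alg_hom iA iB A B f \<and>
     (\<exists>g. alg_hom iB iA B A g \<and>
          homotopic iA iA A A (g \<circ> f) id \<and> homotopic iB iB B B (f \<circ> g) id)"

definition Omega0 :: "'a::comm_ring_1 poly set" where
  "Omega0 = {[:0, -1, 1:] * p | p. True}"

definition emb0 :: "'a::comm_ring_1 \<Rightarrow> 'a poly" where
  "emb0 c = [:c:]"

text \<open>Omega_1: a pair (p,q) in l[t] x l[t] is encoded as the function x :: bool => l[t]
with x True = p and x False = q (pointwise ring operations, HOL-Library.Function_Algebras).\<close>
definition Omega1 :: "(bool \<Rightarrow> 'a::comm_ring_1 poly) set" where
  "Omega1 = {x. poly (x True) 1 = poly (x False) 0 \<and> poly (x True) 0 = 0 \<and> poly (x False) 1 = 0}"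

definition emb1 :: "'a::comm_ring_1 \<Rightarrow> (bool \<Rightarrow> 'a poly)" where
  "emb1 c = (\<lambda>_. [:c:])"

definition beta :: "'a::comm_ring_1 poly \<Rightarrow> (bool \<Rightarrow> 'a poly)" where
  "beta p = (\<lambda>b. if b then p else 0)"

end

theory Submission
  imports Defs "HOL-Computational_Algebra.Field_as_Ring" "HOL-Computational_Algebra.Polynomial_Factorial"
begin

text \<open>
  Call an endomorphism f of \<open>\<Omega>\<^sub>0\<close> a nondegenerate substitution if
  \<open>f x = x \<circ> u\<close> on \<open>\<Omega>\<^sub>0\<close> for some \<open>u \<in> \<ell>[t]\<close> with \<open>u(0) \<noteq> u(1)\<close>.
  The identity is one. No map \<open>g \<circ> \<beta>\<close> is one: multiplicativity of g applied to
  \<open>(t, 1 - t) \<cdot> \<beta>(t\<^sup>2 - t) = \<beta>((t\<^sup>2 - t) t)\<close> forces \<open>u = g(t, 1 - t) \<in> \<Omega>\<^sub>0\<close>,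
  so \<open>u(0) = u(1) = 0\<close>.

  The property is invariant under polynomial homotopy. Every \<open>\<ell>\<close>-algebra map
  \<open>\<psi> : \<Omega>\<^sub>0 \<rightarrow> R[t]\<close>, R a domain, with \<open>A = \<psi>(t\<^sup>2 - t) \<noteq> 0\<close> and \<open>A(0) = 0\<close> is a
  substitution \<open>x \<mapsto> x(U)\<close>: for \<open>B = \<psi>((t\<^sup>2 - t) t)\<close> one has \<open>B\<^sup>2 = A B + A\<^sup>3\<close>,
  which forces \<open>B = U A\<close> with \<open>U\<^sup>2 - U = A\<close>. Reading a homotopy H as a map into
  \<open>\<ell>[s][t]\<close> turns it into a substitution by some \<open>U(s, t)\<close>. Now \<open>U(s, 0)\<close> and
  \<open>U(s, 1)\<close> are idempotents of \<open>\<ell>[s]\<close>, hence constant, so whether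
  \<open>U(d, 0) \<noteq> U(d, 1)\<close> does not depend on d.
\<close>

text \<open>The field of fractions as a Euclidean ring, as done for \<^typ>\<open>rat\<close> in Field_as_Ring,
  so that polynomials over it have gcds.\<close>

instantiation fract :: (idom)
  "{unique_euclidean_ring, normalization_euclidean_semiring, normalization_semidom_multiplicative}"
begin
definition [simp]: "normalize_fract = (normalize_field :: 'a fract \<Rightarrow> _)"
definition [simp]: "unit_factor_fract = (unit_factor_field :: 'a fract \<Rightarrow> _)"
definition [simp]: "modulo_fract = (mod_field :: 'a fract \<Rightarrow> _)"
definition [simp]: "euclidean_size_fract = (euclidean_size_field :: 'a fract \<Rightarrow> _)"
definition [simp]: "division_segment (x :: 'a fract) = 1"
instance
  by standard (simp_all add: dvd_field_iff field_split_simps split: if_splits)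
end

instantiation fract :: (idom) euclidean_ring_gcd
begin
definition gcd_fract :: "'a fract \<Rightarrow> 'a fract \<Rightarrow> 'a fract" where
  "gcd_fract = Euclidean_Algorithm.gcd"
definition lcm_fract :: "'a fract \<Rightarrow> 'a fract \<Rightarrow> 'a fract" where
  "lcm_fract = Euclidean_Algorithm.lcm"
definition Gcd_fract :: "'a fract set \<Rightarrow> 'a fract" where
  "Gcd_fract = Euclidean_Algorithm.Gcd"
definition Lcm_fract :: "'a fract set \<Rightarrow> 'a fract" where
  "Lcm_fract = Euclidean_Algorithm.Lcm"
instance by standard (simp_all add: gcd_fract_def lcm_fract_def Gcd_fract_def Lcm_fract_def)
end

instance fract :: (idom) field_gcd ..

lemma idempotent_iff: "x * x = x \<longleftrightarrow> x = 0 \<or> x = (1 :: 'a::idom)"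
  by (metis mult_cancel_left1 mult_zero_left mult_1)

lemma dvd_if_quadratic_relation:
  fixes A B :: "'a::{idom, semiring_gcd}"
  assumes "B * B = A * B + A ^ 3"
  shows "A dvd B"
proof (cases "gcd A B = 0")
  case True
  then show ?thesis by simp
next
  case False
  then obtain a b g where ab: "A = a * g" "B = b * g" "coprime a b" and "g \<noteq> 0"
    using gcd_coprime_exists by blast
  have "(b * b) * g\<^sup>2 = (a * (a\<^sup>2 * g + b)) * g\<^sup>2"
    using assms unfolding ab by (simp add: algebra_simps power2_eq_square power3_eq_cube)
  then have "a dvd b * b"
    using \<open>g \<noteq> 0\<close> by simp
  moreover have "coprime a (b * b)"
    using ab(3) by simp
  ultimately have "is_unit a"
    by (meson coprime_common_divisor dvd_refl)
  then show ?thesis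
    using ab by (simp add: unit_imp_dvd)
qed

locale ring_hom =
  fixes h :: "'a::comm_ring_1 \<Rightarrow> 'b::comm_ring_1"
  assumes hom_add [simp]: "h (x + y) = h x + h y"
    and hom_mult [simp]: "h (x * y) = h x * h y"
    and hom_one [simp]: "h 1 = 1"
begin

lemma hom_zero [simp]: "h 0 = 0"
  using hom_add[of 0 0] by simp

lemma hom_uminus [simp]: "h (- x) = - h x"
  using hom_add[of "- x" x] by (simp add: eq_neg_iff_add_eq_0)

lemma hom_diff [simp]: "h (x - y) = h x - h y"
  using hom_add[of x "- y"] by simp

lemma hom_sum [simp]: "h (sum f S) = (\<Sum>i\<in>S. h (f i))"
  by (induction S rule: infinite_finite_induct) simp_all

lemma map_poly_add: "map_poly h (p + q) = map_poly h p + map_poly h q"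
  by (rule poly_eqI) (simp add: coeff_map_poly)

lemma map_poly_mult: "map_poly h (p * q) = map_poly h p * map_poly h q"
  by (rule poly_eqI) (simp add: coeff_map_poly coeff_mult)

lemma map_poly_sq_minus_id [simp]: "map_poly h [:0, -1, 1:] = [:0, -1, 1:]"
  by (simp add: map_poly_pCons)

lemma hom_poly: "h (poly p x) = poly (map_poly h p) (h x)"
  by (induction p) (simp_all add: map_poly_pCons)

lemma map_poly_pcompose: "map_poly h (pcompose p q) = pcompose (map_poly h p) (map_poly h q)"
  by (induction p) (simp_all add: map_poly_pCons pcompose_pCons map_poly_add map_poly_mult)

text \<open>Since \<open>V\<^sub>0\<close> is idempotent, \<open>2 V\<^sub>0 - 1\<close> is a unit, and comparing coefficients in
  \<open>V\<^sup>2 - V = A\<close> expresses each \<open>V\<^sub>k\<close> through \<open>A\<^sub>k\<close> and the lower coefficients.\<close>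

lemma coeff_in_range_if_sq_minus_self:
  fixes V :: "'b poly"
  assumes eq: "V * V - V = map_poly h A" and V0: "coeff V 0 \<in> {0, 1}"
  shows "coeff V k \<in> range h"
proof (induction k rule: less_induct)
  case (less k)
  obtain c0 where c0: "h c0 = coeff V 0" "h c0 * h c0 = h c0"
    using V0 by (metis hom_zero hom_one insertE empty_iff mult_1 mult_zero_left)
  show ?case
  proof (cases "k = 0")
    case True
    then show ?thesis using c0 by (metis rangeI)
  next
    case False
    have "\<forall>i\<in>{1..<k}. \<exists>c. h c = coeff V i * coeff V (k - i)"
      using less False by (metis atLeastLessThan_iff diff_less hom_mult imageE less_one
          linorder_not_le zero_less_iff_neq_zero)
    then obtain s where s: "\<And>i. i \<in> {1..<k} \<Longrightarrow> h (s i) = coeff V i * coeff V (k - i)"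
      by metis
    have split: "{..k} = insert 0 (insert k {1..<k})"
      using False by auto
    have "coeff (V * V) k = 2 * coeff V 0 * coeff V k + (\<Sum>i\<in>{1..<k}. coeff V i * coeff V (k - i))"
      unfolding coeff_mult split using False by (simp add: algebra_simps)
    also have "(\<Sum>i\<in>{1..<k}. coeff V i * coeff V (k - i)) = h (\<Sum>i\<in>{1..<k}. s i)"
      by (simp add: s)
    finally have lin: "coeff V k * (2 * h c0 - 1) = h (coeff A k - sum s {1..<k})"
      using arg_cong[OF eq, of "\<lambda>p. coeff p k"] c0 by (simp add: coeff_map_poly algebra_simps)
    have "(2 * h c0 - 1) * (2 * h c0 - 1) = 4 * (h c0 * h c0 - h c0) + 1"
      by (simp add: algebra_simps)
    then have unit: "(2 * h c0 - 1) * (2 * h c0 - 1) = 1"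
      using c0(2) by simp
    have "coeff V k = coeff V k * (2 * h c0 - 1) * (2 * h c0 - 1)"
      by (simp only: mult.assoc unit mult_1_right)
    also have "\<dots> = h (coeff A k - sum s {1..<k}) * h (c0 + c0 - 1)"
      by (subst lin) (simp only: hom_diff hom_add hom_one mult_2)
    also have "\<dots> = h ((coeff A k - sum s {1..<k}) * (c0 + c0 - 1))"
      by (rule hom_mult[symmetric])
    finally show ?thesis by (metis rangeI)
  qed
qed

end

lemma ring_hom_map_poly:
  assumes "ring_hom h"
  shows "ring_hom (map_poly h)"
proof -
  interpret ring_hom h by fact
  show ?thesis by unfold_locales (simp_all add: map_poly_add map_poly_mult)
qed

lemma ring_hom_poly_map_poly:
  assumes "ring_hom h"
  shows "ring_hom (\<lambda>p. poly (map_poly h p) x)"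
proof -
  interpret ring_hom h by fact
  show ?thesis by unfold_locales (simp_all add: map_poly_add map_poly_mult)
qed

lemma ring_hom_poly: "ring_hom (\<lambda>p. poly p x)"
  by unfold_locales simp_all

lemma ring_hom_pConst: "ring_hom (\<lambda>c. [:c:])"
  by unfold_locales simp_all

lemma ring_hom_to_fract: "ring_hom to_fract"
  by unfold_locales simp_all

lemma ex_map_poly_to_fract_if_coeffs:
  fixes V :: "'a::idom fract poly"
  assumes "\<And>k. coeff V k \<in> range to_fract"
  shows "\<exists>U. V = map_poly to_fract U"
proof
  have inv0: "inv to_fract 0 = (0 :: 'a)"
    by (metis inv_f_f inj_on_def to_fract_0 to_fract_eq_iff)
  show "V = map_poly to_fract (map_poly (inv to_fract) V)"
    by (rule poly_eqI) (simp add: coeff_map_poly inv0 f_inv_into_f[OF assms])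
qed

lemma poly_dvd_if_quadratic_relation:
  fixes A B :: "'a::idom poly"
  assumes rel: "B * B = A * B + A ^ 3" and A0: "poly A 0 = 0"
  shows "\<exists>U. B = U * A"
proof (cases "A = 0")
  case True
  with rel show ?thesis by simp
next
  case False
  interpret to_fract: ring_hom to_fract by (rule ring_hom_to_fract)
  let ?A = "map_poly to_fract A" and ?B = "map_poly to_fract B"
  have rel': "?B * ?B = ?A * ?B + ?A ^ 3"
    using arg_cong[OF rel, of "map_poly to_fract"] by (simp add: power3_eq_cube)
  then obtain V where V: "?B = V * ?A"
    using dvd_if_quadratic_relation by (metis dvdE mult.commute)
  have "(?A * ?A) * (V * V - V - ?A) = 0"
    using rel' unfolding V by (simp add: algebra_simps power3_eq_cube)
  then have VV: "V * V - V = ?A"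
    using False by simp
  have "coeff (V * V - V) 0 = 0"
    using A0 by (simp add: VV coeff_map_poly poly_0_coeff_0)
  then have "coeff V 0 \<in> {0, 1}"
    by (simp add: coeff_mult idempotent_iff)
  then obtain U where "V = map_poly to_fract U"
    using ex_map_poly_to_fract_if_coeffs to_fract.coeff_in_range_if_sq_minus_self[OF VV] by blast
  then have "map_poly to_fract B = map_poly to_fract (U * A)"
    by (simp add: V)
  then have "B = U * A"
    by (simp only: fract_poly_eq_iff)
  then show ?thesis ..
qed

lemma mult_in_Omega0: "[:0, -1, 1:] * p \<in> Omega0"
  by (auto simp: Omega0_def)

lemma sq_minus_id_in_Omega0: "[:0, -1, 1:] \<in> Omega0"
  using mult_in_Omega0[of 1] by simp

lemma Omega0E:
  assumes "x \<in> Omega0"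
  obtains p where "x = [:0, -1, 1:] * p"
  using assms by (auto simp: Omega0_def)

lemma poly_Omega0_0_1:
  assumes "x \<in> Omega0"
  shows "poly x 0 = 0" and "poly x 1 = 0"
  using assms by (auto elim: Omega0E)

lemma pcompose_sq_minus_id: "pcompose [:0, -1, 1:] u = u * u - (u :: 'a::comm_ring_1 poly)"
  by (simp add: pcompose_pCons algebra_simps)

lemma pcompose_sq_minus_id_nonzero:
  fixes u :: "'a::idom poly"
  assumes "poly u 0 \<noteq> poly u 1"
  shows "pcompose [:0, -1, 1:] u \<noteq> 0"
  using assms by (auto simp: pcompose_sq_minus_id idempotent_iff)

lemma pcompose_mult_id: "pcompose (p * [:0, 1:]) q = pcompose p q * (q :: 'a::comm_ring_1 poly)"
  by (simp add: pcompose_mult pcompose_pCons)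

locale Omega0_hom =
  fixes j :: "'a::idom \<Rightarrow> 'b::idom" and \<psi> :: "'a poly \<Rightarrow> 'b poly"
  assumes ring_hom_j: "ring_hom j"
    and add: "\<And>x y. x \<in> Omega0 \<Longrightarrow> y \<in> Omega0 \<Longrightarrow> \<psi> (x + y) = \<psi> x + \<psi> y"
    and mult: "\<And>x y. x \<in> Omega0 \<Longrightarrow> y \<in> Omega0 \<Longrightarrow> \<psi> (x * y) = \<psi> x * \<psi> y"
    and scale: "\<And>c x. x \<in> Omega0 \<Longrightarrow> \<psi> ([:c:] * x) = [:j c:] * \<psi> x"
begin

lemma on_multiples:
  assumes nonzero: "\<psi> [:0, -1, 1:] \<noteq> 0"
    and shift: "\<psi> ([:0, -1, 1:] * [:0, 1:]) = U * \<psi> [:0, -1, 1:]"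
  shows "\<psi> ([:0, -1, 1:] * r) = \<psi> [:0, -1, 1:] * pcompose (map_poly j r) U"
proof -
  interpret j: ring_hom j by (rule ring_hom_j)
  define e :: "'a poly" where "e = [:0, -1, 1:]"
  define t :: "'a poly" where "t = [:0, 1:]"
  have eO: "e * p \<in> Omega0" for p
    unfolding e_def by (rule mult_in_Omega0)
  have e_in: "e \<in> Omega0"
    using eO[of 1] by simp
  have shift_e_t: "\<psi> (e * t) = U * \<psi> e"
    using shift by (simp only: e_def t_def)
  show ?thesis
    unfolding e_def[symmetric]
  proof (induction r)
    case 0
    show ?case
      using scale[OF e_in, of 0] by simp
  next
    case (pCons a p)
    have "\<psi> (e * (t * p)) * \<psi> e = \<psi> ((e * (t * p)) * e)"
      by (rule mult[OF eO e_in, symmetric])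
    also have "(e * (t * p)) * e = (e * t) * (e * p)"
      by (simp add: mult_ac)
    also have "\<psi> ((e * t) * (e * p)) = \<psi> (e * t) * \<psi> (e * p)"
      by (rule mult[OF eO eO])
    also have "\<dots> = (U * pcompose (map_poly j p) U * \<psi> e) * \<psi> e"
      by (simp add: shift_e_t pCons.IH mult_ac)
    finally have shifted: "\<psi> (e * (t * p)) = U * pcompose (map_poly j p) U * \<psi> e"
      using nonzero by (simp add: e_def)
    have "e * pCons a p = [:a:] * e + e * (t * p)"
      by (simp add: t_def algebra_simps)
    moreover have "[:a:] * e \<in> Omega0"
      using eO[of "[:a:]"] by (simp add: mult.commute)
    ultimately have "\<psi> (e * pCons a p) = \<psi> ([:a:] * e) + \<psi> (e * (t * p))"
      using add eO by simp
    also have "\<psi> ([:a:] * e) = [:j a:] * \<psi> e"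
      by (rule scale[OF e_in])
    also note shifted
    finally show ?case
      by (simp add: map_poly_pCons pcompose_pCons algebra_simps)
  qed
qed

lemma eq_pcompose:
  assumes nonzero: "\<psi> [:0, -1, 1:] \<noteq> 0" and vanish: "poly (\<psi> [:0, -1, 1:]) 0 = 0"
  shows "\<exists>U. \<forall>x\<in>Omega0. \<psi> x = pcompose (map_poly j x) U"
proof -
  interpret j: ring_hom j by (rule ring_hom_j)
  define e :: "'a poly" where "e = [:0, -1, 1:]"
  define t :: "'a poly" where "t = [:0, 1:]"
  have eO: "e * p \<in> Omega0" for p
    unfolding e_def by (rule mult_in_Omega0)
  have e_in: "e \<in> Omega0"
    using eO[of 1] by simp
  define A where "A = \<psi> e"
  define B where "B = \<psi> (e * t)"
  have A_nz: "A \<noteq> 0"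
    using nonzero by (simp add: A_def e_def)
  have "B * B = \<psi> ((e * t) * (e * t))"
    unfolding B_def by (rule mult[OF eO eO, symmetric])
  also have "(e * t) * (e * t) = e * (e * e) + e * (e * t)"
    by (simp add: e_def t_def)
  also have "\<psi> \<dots> = \<psi> e * (\<psi> e * \<psi> e) + \<psi> e * \<psi> (e * t)"
    using e_in eO by (simp add: add mult)
  finally have rel: "B * B = A * (A * A) + A * B"
    by (simp add: A_def B_def)
  then obtain U where BU: "B = U * A"
    using poly_dvd_if_quadratic_relation[of B A] vanish
    by (auto simp: A_def e_def algebra_simps power3_eq_cube)
  have "(A * A) * (U * U - U - A) = 0"
    using rel unfolding BU by (simp add: algebra_simps)
  then have UU: "pcompose (map_poly j e) U = A"
    using A_nz by (simp add: e_def pcompose_sq_minus_id)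
  have "\<psi> x = pcompose (map_poly j x) U" if x: "x \<in> Omega0" for x
  proof -
    obtain r where r: "x = e * r"
      using x unfolding e_def by (rule Omega0E)
    have "\<psi> x = A * pcompose (map_poly j r) U"
      using on_multiples[OF nonzero, of U r] BU by (simp add: r A_def B_def e_def t_def)
    then show ?thesis
      by (simp add: r j.map_poly_mult pcompose_mult UU)
  qed
  then show ?thesis by blast
qed

end

text \<open>A homotopy \<open>H x \<in> \<ell>[t][s]\<close> has the homotopy parameter s as its outer variable;
  \<open>swap_vars\<close> makes t the outer one.\<close>

definition swap_vars :: "'a::comm_ring_1 poly poly \<Rightarrow> 'a poly poly" where
  "swap_vars P = poly (map_poly (map_poly (\<lambda>c. [:c:])) P) [:[:0, 1:]:]"

lemma ring_hom_swap_vars: "ring_hom swap_vars"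
  unfolding swap_vars_def
  by (intro ring_hom_poly_map_poly ring_hom_map_poly ring_hom_pConst)

lemma swap_vars_const [simp]: "swap_vars [:[:c:]:] = [:[:c:]:]"
  by (simp add: swap_vars_def map_poly_pCons)

lemma poly_swap_vars_const: "poly (swap_vars P) [:c:] = map_poly (\<lambda>p. poly p c) P"
proof -
  interpret ev: ring_hom "\<lambda>Q :: 'a poly poly. poly Q [:c:]" by (rule ring_hom_poly)
  have "poly (swap_vars P) [:c:] =
      poly (map_poly (\<lambda>p. poly (map_poly (\<lambda>c. [:c:]) p) [:c:]) P) [:0, 1:]"
    by (simp add: swap_vars_def ev.hom_poly map_poly_map_poly o_def)
  also have "(\<lambda>p. poly (map_poly (\<lambda>c. [:c:]) p) [:c:]) = (\<lambda>p. [:poly p c:])"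
    by (simp add: pcompose_altdef[symmetric] pcompose_pCons_0)
  also have "map_poly (\<lambda>p. [:poly p c:]) P = map_poly (\<lambda>x. [:x:]) (map_poly (\<lambda>p. poly p c) P)"
    by (simp add: map_poly_map_poly o_def)
  finally show ?thesis
    by (simp add: pcompose_altdef[symmetric])
qed

lemma map_poly_poly_swap_vars: "map_poly (\<lambda>r. poly r a) (swap_vars P) = poly P [:a:]"
proof -
  interpret ev: ring_hom "map_poly (\<lambda>r :: 'a poly. poly r a)"
    by (intro ring_hom_map_poly ring_hom_poly)
  show ?thesis
    by (simp add: swap_vars_def ev.hom_poly map_poly_map_poly o_def map_poly_pCons)
qed

lemma poly_swap_vars_Omega0_coeffs:
  assumes "P \<in> poly_alg Omega0" and "c \<in> {0, 1}"
  shows "poly (swap_vars P) [:c:] = 0"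
proof -
  have "coeff P k \<in> Omega0" for k
    using assms(1) by (simp add: poly_alg_def)
  then have "coeff (map_poly (\<lambda>p. poly p c) P) k = 0" for k
    using assms(2) poly_Omega0_0_1 by (auto simp: coeff_map_poly)
  then show ?thesis
    by (simp add: poly_swap_vars_const poly_eq_iff)
qed

lemma bivariate_eval_eq_if_idempotent:
  fixes U :: "'a::idom poly poly"
  assumes "poly U [:c:] * poly U [:c:] = poly U [:c:]"
  shows "poly (map_poly (\<lambda>r. poly r a) U) c = poly (map_poly (\<lambda>r. poly r b) U) c"
proof -
  have "poly (map_poly (\<lambda>r. poly r d) U) c = poly (poly U [:c:]) d" for d
    using ring_hom.hom_poly[OF ring_hom_poly[of d], of U "[:c:]"] by simp
  then show ?thesis
    using assms by (auto simp: idempotent_iff)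
qed

lemma homotopy_swap_eq_pcompose:
  fixes H :: "'a::idom poly \<Rightarrow> 'a poly poly"
  assumes H: "alg_hom emb0 (poly_emb emb0) Omega0 (poly_alg Omega0) H"
    and nonzero: "poly (H [:0, -1, 1:]) [:a:] \<noteq> 0"
  shows "\<exists>U. \<forall>x\<in>Omega0. swap_vars (H x) = pcompose (map_poly (\<lambda>c. [:c:]) x) U"
proof (rule Omega0_hom.eq_pcompose)
  interpret swap_vars: ring_hom swap_vars by (rule ring_hom_swap_vars)
  have H_in: "\<And>x. x \<in> Omega0 \<Longrightarrow> H x \<in> poly_alg Omega0"
    and H_add: "\<And>x y. x \<in> Omega0 \<Longrightarrow> y \<in> Omega0 \<Longrightarrow> H (x + y) = H x + H y"
    and H_mult: "\<And>x y. x \<in> Omega0 \<Longrightarrow> y \<in> Omega0 \<Longrightarrow> H (x * y) = H x * H y"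
    and H_scale: "\<And>c x. x \<in> Omega0 \<Longrightarrow> H ([:c:] * x) = [:[:c:]:] * H x"
    using H by (auto simp: alg_hom_def emb0_def poly_emb_def)
  show "Omega0_hom (\<lambda>c::'a. [:c:]) (\<lambda>x. swap_vars (H x))"
  proof (rule Omega0_hom.intro)
    show "ring_hom (\<lambda>c::'a. [:c:])"
      by (rule ring_hom_pConst)
    show "swap_vars (H (x + y)) = swap_vars (H x) + swap_vars (H y)"
      and "swap_vars (H (x * y)) = swap_vars (H x) * swap_vars (H y)"
      if "x \<in> Omega0" "y \<in> Omega0" for x y
      using that by (simp_all add: H_add H_mult)
    show "swap_vars (H ([:c:] * x)) = [:[:c:]:] * swap_vars (H x)" if "x \<in> Omega0" for c x
      using that by (simp only: H_scale swap_vars.hom_mult swap_vars_const)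
  qed
  show "swap_vars (H [:0, -1, 1:]) \<noteq> 0"
    using nonzero by (metis map_poly_0 map_poly_poly_swap_vars)
  show "poly (swap_vars (H [:0, -1, 1:])) 0 = 0"
    using poly_swap_vars_Omega0_coeffs[OF H_in[OF sq_minus_id_in_Omega0], of 0] by simp
qed

lemma homotopy_eq_pcompose:
  fixes H :: "'a::idom poly \<Rightarrow> 'a poly poly"
  assumes H: "alg_hom emb0 (poly_emb emb0) Omega0 (poly_alg Omega0) H"
    and nonzero: "poly (H [:0, -1, 1:]) [:a:] \<noteq> 0"
  obtains U :: "'a poly poly" where
    "\<And>x d. x \<in> Omega0 \<Longrightarrow> poly (H x) [:d:] = pcompose x (map_poly (\<lambda>r. poly r d) U)"
    and "\<And>c d d'. c \<in> {0, 1} \<Longrightarrow>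
      poly (map_poly (\<lambda>r. poly r d) U) c = poly (map_poly (\<lambda>r. poly r d') U) c"
proof -
  obtain U where U: "\<forall>x\<in>Omega0. swap_vars (H x) = pcompose (map_poly (\<lambda>c. [:c:]) x) U"
    using homotopy_swap_eq_pcompose[OF assms] by blast
  have "poly (H x) [:d:] = pcompose x (map_poly (\<lambda>r. poly r d) U)" if "x \<in> Omega0" for x d
  proof -
    interpret ev: ring_hom "\<lambda>r :: 'a poly. poly r d" by (rule ring_hom_poly)
    show ?thesis
      using U that
      by (simp flip: map_poly_poly_swap_vars add: ev.map_poly_pcompose map_poly_map_poly o_def)
  qed
  moreover have "poly (map_poly (\<lambda>r. poly r d) U) c = poly (map_poly (\<lambda>r. poly r d') U) c"
    if "c \<in> {0, 1}" for c d d'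
  proof (rule bivariate_eval_eq_if_idempotent)
    have "swap_vars (H [:0, -1, 1:]) = pcompose (map_poly (\<lambda>c. [:c:]) [:0, -1, 1:]) U"
      using U sq_minus_id_in_Omega0 by blast
    also have "\<dots> = U * U - U"
      unfolding ring_hom.map_poly_sq_minus_id[OF ring_hom_pConst] by (rule pcompose_sq_minus_id)
    finally have "swap_vars (H [:0, -1, 1:]) = U * U - U" .
    moreover have "H [:0, -1, 1:] \<in> poly_alg Omega0"
      using H sq_minus_id_in_Omega0 unfolding alg_hom_def by blast
    ultimately show "poly U [:c:] * poly U [:c:] = poly U [:c:]"
      using poly_swap_vars_Omega0_coeffs[OF _ that] by fastforce
  qed
  ultimately show ?thesis
    using that by blast
qed

definition nondegenerate_substitution :: "('a::comm_ring_1 poly \<Rightarrow> 'a poly) \<Rightarrow> bool" where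
  "nondegenerate_substitution f \<longleftrightarrow>
     (\<exists>u. poly u 0 \<noteq> poly u 1 \<and> (\<forall>x\<in>Omega0. f x = pcompose x u))"

lemma nondegenerate_substitution_id: "nondegenerate_substitution id"
  unfolding nondegenerate_substitution_def by (rule exI[of _ "[:0, 1:]"]) simp

lemma homotopy_preserves_nondegenerate_substitution:
  fixes H :: "'a::idom poly \<Rightarrow> 'a poly poly"
  assumes H: "alg_hom emb0 (poly_emb emb0) Omega0 (poly_alg Omega0) H"
    and f: "\<forall>x\<in>Omega0. f x = poly (H x) [:a:]" and g: "\<forall>x\<in>Omega0. g x = poly (H x) [:b:]"
    and "nondegenerate_substitution f"
  shows "nondegenerate_substitution g"
proof -
  define e :: "'a poly" where "e = [:0, -1, 1:]"
  have e_in: "e \<in> Omega0" "e * [:0, 1:] \<in> Omega0"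
    using mult_in_Omega0[of 1] mult_in_Omega0[of "[:0, 1:]"] by (simp_all add: e_def)
  obtain u where u: "poly u 0 \<noteq> poly u 1" "\<forall>x\<in>Omega0. f x = pcompose x u"
    using assms(4) by (auto simp: nondegenerate_substitution_def)
  have eu: "pcompose e u \<noteq> 0"
    unfolding e_def by (rule pcompose_sq_minus_id_nonzero[OF u(1)])
  then obtain U where
    H_at: "\<And>x d. x \<in> Omega0 \<Longrightarrow> poly (H x) [:d:] = pcompose x (map_poly (\<lambda>r. poly r d) U)"
    and ends: "\<And>c d d'. c \<in> {0, 1} \<Longrightarrow>
      poly (map_poly (\<lambda>r. poly r d) U) c = poly (map_poly (\<lambda>r. poly r d') U) c"
    using homotopy_eq_pcompose[OF H, of a] f u(2) e_in by (auto simp: e_def)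
  define U_at where "U_at d = map_poly (\<lambda>r. poly r d) U" for d
  have same: "pcompose x u = pcompose x (U_at a)" if "x \<in> Omega0" for x
    using f u(2) H_at that by (simp add: U_at_def)
  have "pcompose e u * u = pcompose (e * [:0, 1:]) u"
    by (rule pcompose_mult_id[symmetric])
  also have "\<dots> = pcompose (e * [:0, 1:]) (U_at a)"
    by (rule same[OF e_in(2)])
  also have "\<dots> = pcompose e (U_at a) * U_at a"
    by (rule pcompose_mult_id)
  also have "pcompose e (U_at a) = pcompose e u"
    by (rule same[OF e_in(1), symmetric])
  finally have "u = U_at a"
    using eu by simp
  then have "poly (U_at b) 0 \<noteq> poly (U_at b) 1"
    using u(1) ends[of 0 a b] ends[of 1 a b] by (simp add: U_at_def)
  then show ?thesis
    using g H_at unfolding nondegenerate_substitution_def U_at_def by auto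
qed

lemma elem_homotopic_preserves_nondegenerate_substitution:
  fixes f g :: "'a::idom poly \<Rightarrow> 'a poly"
  assumes "elem_homotopic emb0 emb0 Omega0 Omega0 f g"
  shows "nondegenerate_substitution f \<longleftrightarrow> nondegenerate_substitution g"
proof -
  obtain H where H: "alg_hom emb0 (poly_emb emb0) Omega0 (poly_alg Omega0) H"
    and "\<forall>x\<in>Omega0. poly (H x) 0 = f x" "\<forall>x\<in>Omega0. poly (H x) 1 = g x"
    using assms by (auto simp: elem_homotopic_def)
  then have "\<forall>x\<in>Omega0. f x = poly (H x) [:0:]" "\<forall>x\<in>Omega0. g x = poly (H x) [:1:]"
    by (simp_all add: one_pCons)
  then show ?thesis
    using homotopy_preserves_nondegenerate_substitution[OF H] by metis
qed

lemma homotopic_preserves_nondegenerate_substitution: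
  fixes f g :: "'a::idom poly \<Rightarrow> 'a poly"
  assumes "homotopic emb0 emb0 Omega0 Omega0 f g"
  shows "nondegenerate_substitution f \<longleftrightarrow> nondegenerate_substitution g"
  using assms unfolding homotopic_def
  by (induction rule: rtranclp_induct)
    (auto dest: elem_homotopic_preserves_nondegenerate_substitution)

lemma not_nondegenerate_substitution_through_Omega1:
  fixes g :: "(bool \<Rightarrow> 'a::idom poly) \<Rightarrow> 'a poly"
  assumes g: "alg_hom emb1 emb0 Omega1 Omega0 g"
  shows "\<not> nondegenerate_substitution (g \<circ> beta)"
proof
  assume "nondegenerate_substitution (g \<circ> beta)"
  then obtain u where u: "poly u 0 \<noteq> poly u 1" "\<forall>x\<in>Omega0. g (beta x) = pcompose x u"
    by (auto simp: nondegenerate_substitution_def)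
  define e :: "'a poly" where "e = [:0, -1, 1:]"
  have e_in: "e \<in> Omega0" "e * [:0, 1:] \<in> Omega0"
    using mult_in_Omega0[of 1] mult_in_Omega0[of "[:0, 1:]"] by (simp_all add: e_def)
  define y :: "bool \<Rightarrow> 'a poly" where "y = (\<lambda>b. if b then [:0, 1:] else [:1, -1:])"
  have y_in: "y \<in> Omega1"
    by (simp add: y_def Omega1_def)
  have beta_in: "beta e \<in> Omega1"
    using poly_Omega0_0_1[OF e_in(1)] by (simp add: beta_def Omega1_def)
  have "g y * pcompose e u = g y * g (beta e)"
    using u(2) e_in by simp
  also have "\<dots> = g (y * beta e)"
    using g y_in beta_in by (simp add: alg_hom_def)
  also have "y * beta e = beta (e * [:0, 1:])"
    by (auto simp: y_def beta_def)
  also have "g (beta (e * [:0, 1:])) = pcompose e u * u"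
    using u(2) e_in pcompose_mult_id by metis
  finally have "u = g y"
    using pcompose_sq_minus_id_nonzero[OF u(1)] by (simp add: e_def)
  then have "u \<in> Omega0"
    using g y_in by (simp add: alg_hom_def)
  then show False
    using u(1) by (simp add: poly_Omega0_0_1)
qed

theorem lemma3p1:
  shows "\<not> poly_htpy_equiv (emb0 :: 'a::idom \<Rightarrow> 'a poly) emb1 Omega0 Omega1 beta"
proof
  assume "poly_htpy_equiv (emb0 :: 'a::idom \<Rightarrow> 'a poly) emb1 Omega0 Omega1 beta"
  then obtain g :: "(bool \<Rightarrow> 'a poly) \<Rightarrow> 'a poly"
    where g: "alg_hom emb1 emb0 Omega1 Omega0 g"
      and "homotopic emb0 emb0 Omega0 Omega0 (g \<circ> beta) id"
    by (auto simp: poly_htpy_equiv_def)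
  then have "nondegenerate_substitution (g \<circ> beta)"
    using homotopic_preserves_nondegenerate_substitution nondegenerate_substitution_id by blast
  with not_nondegenerate_substitution_through_Omega1[OF g] show False ..
qed

end
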